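(* If $P\subset\mathbb R^d$ is a rational $d$-polytope with $N(P)=-N(P)$, then $\Lambda_P=\Delta_P$, i.e. every upper region of $\Lambda_P$ is an open cell of $\Delta_P$ and conversely.
   Context: A rational $d$-polytope has a unique irredundant presentation $P=\bigcap_{i=1}^m\{\bm x:(\bm a_i,\bm x)\ge b_i\}$ with $(\bm a_i,b_i)\in\mathbb Z^{d+1}$ primitive; $N(P)=\{\bm a_1,\dots,\bm a_m\}$. Upper regions: nonempty sets $U_{\bm c}=\{\bm x: c_i-1<(\bm a_i,\bm x)\le c_i\ \forall i\}$, $\bm c\in\mathbb Z^m$; $\Lambda_P$ is the set of them. $\Delta_P$: the open cells of the arrangement $\{(\bm a_i,\bm x)=k: i\le m, k\in\mathbb Z\}$, i.e. nonempty sets $A_1\cap\cdots\cap A_m$ with each $A_i$ either $\{(\bm a_i,\bm x)=k\}$ or $\{k<(\bm a_i,\bm x)<k+1\}$, $k\in\mathbb Z$. *)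

theory Defs
  imports "HOL-Analysis.Analysis"
begin

definition rvec :: "int^'n \<Rightarrow> real^'n" where
  "rvec v = (\<chi> j. real_of_int (v $ j))"

definition primitive_pair :: "int^'n \<Rightarrow> int \<Rightarrow> bool" where
  "primitive_pair a b \<longleftrightarrow> (\<forall>k::int. (\<forall>j. k dvd a $ j) \<and> k dvd b \<longrightarrow> \<bar>k\<bar> = 1)"

definition irredundant_presentation ::
  "(real^'n) set \<Rightarrow> nat \<Rightarrow> (nat \<Rightarrow> int^'n) \<Rightarrow> (nat \<Rightarrow> int) \<Rightarrow> bool" where
  "irredundant_presentation P m a b \<longleftrightarrow>
     P = {x. \<forall>i<m. rvec (a i) \<bullet> x \<ge> real_of_int (b i)} \<and>
     (\<forall>i<m. primitive_pair (a i) (b i)) \<and>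
     (\<forall>j<m. {x. \<forall>i<m. i \<noteq> j \<longrightarrow> rvec (a i) \<bullet> x \<ge> real_of_int (b i)} \<noteq> P)"

definition rational_polytope_pres ::
  "(real^'n) set \<Rightarrow> nat \<Rightarrow> (nat \<Rightarrow> int^'n) \<Rightarrow> (nat \<Rightarrow> int) \<Rightarrow> bool" where
  "rational_polytope_pres P m a b \<longleftrightarrow>
     irredundant_presentation P m a b \<and> bounded P \<and> aff_dim P = int CARD('n)"

definition normals :: "nat \<Rightarrow> (nat \<Rightarrow> int^'n) \<Rightarrow> (int^'n) set" where
  "normals m a = a ` {..<m}"

text \<open>Upper regions U_c, c in Z^m (only c_0..c_(m-1) matter).\<close>
definition upper_region :: "nat \<Rightarrow> (nat \<Rightarrow> int^'n) \<Rightarrow> (nat \<Rightarrow> int) \<Rightarrow> (real^'n) set" where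
  "upper_region m a c =
     {x. \<forall>i<m. real_of_int (c i) - 1 < rvec (a i) \<bullet> x \<and> rvec (a i) \<bullet> x \<le> real_of_int (c i)}"

definition Lambda_P :: "nat \<Rightarrow> (nat \<Rightarrow> int^'n) \<Rightarrow> (real^'n) set set" where
  "Lambda_P m a = {U. \<exists>c. U = upper_region m a c \<and> U \<noteq> {}}"

definition arr_cell :: "nat \<Rightarrow> (nat \<Rightarrow> int^'n) \<Rightarrow> (nat \<Rightarrow> bool) \<Rightarrow> (nat \<Rightarrow> int) \<Rightarrow> (real^'n) set" where
  "arr_cell m a e k =
     {x. \<forall>i<m. (if e i then rvec (a i) \<bullet> x = real_of_int (k i)
                else real_of_int (k i) < rvec (a i) \<bullet> x \<and> rvec (a i) \<bullet> x < real_of_int (k i) + 1)}"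

definition Delta_P :: "nat \<Rightarrow> (nat \<Rightarrow> int^'n) \<Rightarrow> (real^'n) set set" where
  "Delta_P m a = {A. \<exists>e k. A = arr_cell m a e k \<and> A \<noteq> {}}"

end

theory Submission
  imports Defs
begin

text \<open>Pair every normal \<open>a\<^sub>i\<close> with an opposite normal \<open>a\<^sub>j = -a\<^sub>i\<close>. The two constraints
  \<open>c\<^sub>i - 1 < t \<le> c\<^sub>i\<close> and \<open>c\<^sub>j - 1 < -t \<le> c\<^sub>j\<close> cut out either the point \<open>c\<^sub>i\<close> (when \<open>c\<^sub>i + c\<^sub>j = 0\<close>)
  or the open interval \<open>(c\<^sub>i - 1, c\<^sub>i)\<close> (when \<open>c\<^sub>i + c\<^sub>j = 1\<close>), so every upper region is an
  open cell of the arrangement. Conversely, upper regions cover the space and open cells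
  sharing a point coincide, so every open cell is one of the upper regions.\<close>

lemma inner_rvec_uminus: "rvec (- v) \<bullet> x = - (rvec v \<bullet> x)"
  by (simp add: rvec_def vec_eq_iff inner_vec_def sum_negf)

lemma half_open_inter_reflected:
  fixes c c' :: int and t :: real
  assumes "real_of_int c - 1 < t" "t \<le> real_of_int c"
    and "real_of_int c' - 1 < - t" "- t \<le> real_of_int c'"
  shows "if c + c' = 0 then t = real_of_int c
         else real_of_int c - 1 < t \<and> t < real_of_int c"
proof -
  have "0 \<le> real_of_int (c + c')" "real_of_int (c + c') < 2"
    using assms by simp_all
  then have "c + c' = 0 \<or> c + c' = 1"
    by linarith
  then show ?thesis
    using assms by (auto simp: eq_diff_eq)
qed

lemma opposite_normals_index:
  assumes "normals m a = uminus ` normals m a"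
  obtains J where "\<And>i. i < m \<Longrightarrow> J i < m \<and> a (J i) = - a i"
proof -
  have "\<exists>j<m. a j = - a i" if "i < m" for i
  proof -
    have "a i \<in> uminus ` normals m a"
      using assms that by (simp add: normals_def)
    then show ?thesis
      by (auto simp: normals_def)
  qed
  then show ?thesis
    using that by metis
qed

lemma upper_region_eq_arr_cell:
  assumes J: "\<And>i. i < m \<Longrightarrow> J i < m \<and> a (J i) = - a i"
  shows "upper_region m a c =
           arr_cell m a (\<lambda>i. c i + c (J i) = 0) (\<lambda>i. if c i + c (J i) = 0 then c i else c i - 1)"
  (is "_ = arr_cell m a ?e ?k")
proof (intro set_eqI iffI)
  fix x assume "x \<in> upper_region m a c"
  then have x_bounds: "real_of_int (c j) - 1 < rvec (a j) \<bullet> x \<and> rvec (a j) \<bullet> x \<le> real_of_int (c j)"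
    if "j < m" for j
    using that unfolding upper_region_def by blast
  show "x \<in> arr_cell m a ?e ?k"
    unfolding arr_cell_def
  proof (intro CollectI allI impI)
    fix i assume i: "i < m"
    have "rvec (a (J i)) \<bullet> x = - (rvec (a i) \<bullet> x)"
      using J[OF i] by (simp add: inner_rvec_uminus)
    then have "real_of_int (c i) - 1 < rvec (a i) \<bullet> x" "rvec (a i) \<bullet> x \<le> real_of_int (c i)"
      "real_of_int (c (J i)) - 1 < - (rvec (a i) \<bullet> x)" "- (rvec (a i) \<bullet> x) \<le> real_of_int (c (J i))"
      using x_bounds[OF i] x_bounds[of "J i"] J[OF i] by auto
    then have "if c i + c (J i) = 0 then rvec (a i) \<bullet> x = real_of_int (c i)
        else real_of_int (c i) - 1 < rvec (a i) \<bullet> x \<and> rvec (a i) \<bullet> x < real_of_int (c i)"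
      by (rule half_open_inter_reflected)
    then show "if ?e i then rvec (a i) \<bullet> x = real_of_int (?k i)
        else real_of_int (?k i) < rvec (a i) \<bullet> x \<and> rvec (a i) \<bullet> x < real_of_int (?k i) + 1"
      by simp
  qed
next
  fix x assume x: "x \<in> arr_cell m a ?e ?k"
  show "x \<in> upper_region m a c"
    unfolding upper_region_def
  proof (intro CollectI allI impI)
    fix i assume "i < m"
    with x have "if ?e i then rvec (a i) \<bullet> x = real_of_int (?k i)
        else real_of_int (?k i) < rvec (a i) \<bullet> x \<and> rvec (a i) \<bullet> x < real_of_int (?k i) + 1"
      unfolding arr_cell_def by blast
    then show "real_of_int (c i) - 1 < rvec (a i) \<bullet> x \<and> rvec (a i) \<bullet> x \<le> real_of_int (c i)"
      by (cases "?e i") simp_all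
  qed
qed

lemma mem_upper_region_ceiling: "x \<in> upper_region m a (\<lambda>i. \<lceil>rvec (a i) \<bullet> x\<rceil>)"
  by (simp add: upper_region_def ceiling_correct)

lemma unit_cell_unique:
  fixes k k' :: int and t :: real
  assumes "if e then t = real_of_int k else real_of_int k < t \<and> t < real_of_int k + 1"
    and "if e' then t = real_of_int k' else real_of_int k' < t \<and> t < real_of_int k' + 1"
  shows "e = e' \<and> k = k'"
proof -
  have "\<lfloor>t\<rfloor> = k" "\<lfloor>t\<rfloor> = k'"
    using assms by (auto simp: floor_eq_iff split: if_splits)
  moreover have "e \<longleftrightarrow> t \<in> \<int>" "e' \<longleftrightarrow> t \<in> \<int>"
    using assms by (auto simp: floor_eq_iff split: if_splits elim!: Ints_cases)
  ultimately show ?thesis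
    by simp
qed

lemma arr_cell_eq_if_common_point:
  assumes "x \<in> arr_cell m a e k" "x \<in> arr_cell m a e' k'"
  shows "arr_cell m a e k = arr_cell m a e' k'"
proof -
  have "e i = e' i \<and> k i = k' i" if "i < m" for i
  proof (rule unit_cell_unique)
    show "if e i then rvec (a i) \<bullet> x = real_of_int (k i)
        else real_of_int (k i) < rvec (a i) \<bullet> x \<and> rvec (a i) \<bullet> x < real_of_int (k i) + 1"
      using assms(1) that unfolding arr_cell_def by blast
    show "if e' i then rvec (a i) \<bullet> x = real_of_int (k' i)
        else real_of_int (k' i) < rvec (a i) \<bullet> x \<and> rvec (a i) \<bullet> x < real_of_int (k' i) + 1"
      using assms(2) that unfolding arr_cell_def by blast
  qed
  then show ?thesis
    unfolding arr_cell_def by simp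
qed

theorem mainTheorem6:
  fixes P :: "(real^'n) set" and m :: nat and a :: "nat \<Rightarrow> int^'n" and b :: "nat \<Rightarrow> int"
  assumes "rational_polytope_pres P m a b"
    and "normals m a = uminus ` normals m a"
  shows "Lambda_P m a = Delta_P m a"
proof -
  obtain J where J: "\<And>i. i < m \<Longrightarrow> J i < m \<and> a (J i) = - a i"
    using opposite_normals_index[OF assms(2)] by blast
  have Lambda_sub: "Lambda_P m a \<subseteq> Delta_P m a"
  proof
    fix U assume "U \<in> Lambda_P m a"
    then obtain c where "U = upper_region m a c" "U \<noteq> {}"
      by (auto simp: Lambda_P_def)
    then show "U \<in> Delta_P m a"
      unfolding Delta_P_def using upper_region_eq_arr_cell[OF J, of c] by blast
  qed
  moreover have "A \<in> Lambda_P m a" if "A \<in> Delta_P m a" for A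
  proof -
    obtain e k x where A: "A = arr_cell m a e k" and x: "x \<in> A"
      using \<open>A \<in> Delta_P m a\<close> by (auto simp: Delta_P_def)
    define U where "U = upper_region m a (\<lambda>i. \<lceil>rvec (a i) \<bullet> x\<rceil>)"
    have "x \<in> U" "U \<in> Lambda_P m a"
      using mem_upper_region_ceiling by (auto simp: U_def Lambda_P_def)
    then obtain e' k' where "U = arr_cell m a e' k'"
      using Lambda_sub unfolding Delta_P_def by blast
    then have "A = U"
      using A x \<open>x \<in> U\<close> arr_cell_eq_if_common_point by blast
    with \<open>U \<in> Lambda_P m a\<close> show ?thesis
      by simp
  qed
  ultimately show ?thesis
    by blast
qed

end
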